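(* Let $A\to B$ be a homomorphism of $\mathbb{Z}$-algebras, and let $Q_j=\bigoplus_iB_{ij}$ ($j\in\mathbb{Z}$) be the indecomposable projective $B$-modules. Assume that $A$ is coherent and that all $Q_j$ are coherent as $A$-modules (via the homomorphism). Then $B$ is a coherent $\mathbb{Z}$-algebra.
   Context: $k$ is a fixed field. A $\mathbb{Z}$-algebra is an associative $k$-algebra $A=\bigoplus_{i\le j}A_{ij}$ ($i,j\in\mathbb{Z}$) with $A_{ii}=k$, only nonzero multiplication components $A_{jk}\otimes A_{ij}\to A_{ik}$, with $A_{jj}\otimes A_{ij}\to A_{ij}$ and $A_{ij}\otimes A_{ii}\to A_{ij}$ the identity maps; it is assumed $\dim_kA_{ij}<\infty$. A homomorphism of $\mathbb{Z}$-algebras respects the components $A_{ij}\to B_{ij}$. An $A$-module is a graded right module $M=\bigoplus_iM_i$ with action $M_j\otimes A_{ij}\to M_i$ ($M_i\otimes A_{ii}\to M_i$ the identity). $P_j=\bigoplus_iA_{ij}$; $S_j$ is the module with $(S_j)_j=k$, $(S_j)_i=0$ otherwise; $\mathcal{P}$ is the class of finite direct sums of $P_j$'s. $M$ is finitely generated if it is a quotient of some $P\in\mathcal{P}$; $M$ is coherent if it is finitely generated and for every $f:P\to M$ with $P\in\mathcal{P}$, $\ker f$ is finitely generated. $A$ is coherent (meaning right coherent) if all $P_j$ and all $S_j$ are coherent. *)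

theory Defs
  imports Complex_Main "HOL-Library.Function_Algebras"
begin

text \<open>A Z-algebra is represented by its homogeneous components A_ij, realised as
  k-subspaces of an ambient k-vector space of type 'v (scalar multiplication zscale).
  The multiplication A_jk x A_ij -> A_ik is the indexed map  zmul i j k x y
  (x in A_jk, y in A_ij), and zone i spans A_ii = k.\<close>

record ('k, 'v) zalg =
  zscale :: "'k \<Rightarrow> 'v \<Rightarrow> 'v"
  zcomp  :: "int \<Rightarrow> int \<Rightarrow> 'v set"
  zmul   :: "int \<Rightarrow> int \<Rightarrow> int \<Rightarrow> 'v \<Rightarrow> 'v \<Rightarrow> 'v"
  zone   :: "int \<Rightarrow> 'v"

definition zalgebra :: "('k::field, 'v::ab_group_add) zalg \<Rightarrow> bool" where
  "zalgebra A \<longleftrightarrow>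
     vector_space (zscale A) \<and>
     (\<forall>i j. module.subspace (zscale A) (zcomp A i j)) \<and>
     (\<forall>i j. \<exists>S. finite S \<and> S \<subseteq> zcomp A i j \<and> module.span (zscale A) S = zcomp A i j) \<and>
     (\<forall>i j. j < i \<longrightarrow> zcomp A i j = {0}) \<and>
     (\<forall>i. zone A i \<noteq> 0 \<and> zcomp A i i = module.span (zscale A) {zone A i}) \<and>
     (\<forall>i j k x y. x \<in> zcomp A j k \<longrightarrow> y \<in> zcomp A i j \<longrightarrow> zmul A i j k x y \<in> zcomp A i k) \<and>
     (\<forall>i j k x x' y. x \<in> zcomp A j k \<longrightarrow> x' \<in> zcomp A j k \<longrightarrow> y \<in> zcomp A i j \<longrightarrow>
        zmul A i j k (x + x') y = zmul A i j k x y + zmul A i j k x' y) \<and>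
     (\<forall>i j k x y y'. x \<in> zcomp A j k \<longrightarrow> y \<in> zcomp A i j \<longrightarrow> y' \<in> zcomp A i j \<longrightarrow>
        zmul A i j k x (y + y') = zmul A i j k x y + zmul A i j k x y') \<and>
     (\<forall>i j k c x y. x \<in> zcomp A j k \<longrightarrow> y \<in> zcomp A i j \<longrightarrow>
        zmul A i j k (zscale A c x) y = zscale A c (zmul A i j k x y) \<and>
        zmul A i j k x (zscale A c y) = zscale A c (zmul A i j k x y)) \<and>
     (\<forall>i j k l x y z. x \<in> zcomp A k l \<longrightarrow> y \<in> zcomp A j k \<longrightarrow> z \<in> zcomp A i j \<longrightarrow>
        zmul A i k l x (zmul A i j k y z) = zmul A i j l (zmul A j k l x y) z) \<and>
     (\<forall>i j y. y \<in> zcomp A i j \<longrightarrow> zmul A i j j (zone A j) y = y \<and> zmul A i i j y (zone A i) = y)"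

definition zalg_hom :: "('k::field, 'v::ab_group_add) zalg \<Rightarrow> ('k, 'w::ab_group_add) zalg
    \<Rightarrow> (int \<Rightarrow> int \<Rightarrow> 'v \<Rightarrow> 'w) \<Rightarrow> bool" where
  "zalg_hom A B f \<longleftrightarrow>
     (\<forall>i j x. x \<in> zcomp A i j \<longrightarrow> f i j x \<in> zcomp B i j) \<and>
     (\<forall>i j x y. x \<in> zcomp A i j \<longrightarrow> y \<in> zcomp A i j \<longrightarrow> f i j (x + y) = f i j x + f i j y) \<and>
     (\<forall>i j c x. x \<in> zcomp A i j \<longrightarrow> f i j (zscale A c x) = zscale B c (f i j x)) \<and>
     (\<forall>i j k x y. x \<in> zcomp A j k \<longrightarrow> y \<in> zcomp A i j \<longrightarrow>
        f i k (zmul A i j k x y) = zmul B i j k (f j k x) (f i j y)) \<and>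
     (\<forall>i. f i i (zone A i) = zone B i)"

text \<open>A module M over A: components M_i are k-subspaces of a k-vector space of type 'm,
  the action M_j x A_ij -> M_i is  mact i j m a.\<close>

record ('k, 'v, 'm) zmod =
  mscale :: "'k \<Rightarrow> 'm \<Rightarrow> 'm"
  mcomp  :: "int \<Rightarrow> 'm set"
  mact   :: "int \<Rightarrow> int \<Rightarrow> 'm \<Rightarrow> 'v \<Rightarrow> 'm"

definition is_zmod :: "('k::field, 'v::ab_group_add) zalg \<Rightarrow> ('k, 'v, 'm::ab_group_add) zmod \<Rightarrow> bool" where
  "is_zmod A M \<longleftrightarrow>
     vector_space (mscale M) \<and>
     (\<forall>i. module.subspace (mscale M) (mcomp M i)) \<and>
     (\<forall>i j m a. m \<in> mcomp M j \<longrightarrow> a \<in> zcomp A i j \<longrightarrow> mact M i j m a \<in> mcomp M i) \<and>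
     (\<forall>i j m m' a. m \<in> mcomp M j \<longrightarrow> m' \<in> mcomp M j \<longrightarrow> a \<in> zcomp A i j \<longrightarrow>
        mact M i j (m + m') a = mact M i j m a + mact M i j m' a) \<and>
     (\<forall>i j m a a'. m \<in> mcomp M j \<longrightarrow> a \<in> zcomp A i j \<longrightarrow> a' \<in> zcomp A i j \<longrightarrow>
        mact M i j m (a + a') = mact M i j m a + mact M i j m a') \<and>
     (\<forall>i j c m a. m \<in> mcomp M j \<longrightarrow> a \<in> zcomp A i j \<longrightarrow>
        mact M i j (mscale M c m) a = mscale M c (mact M i j m a) \<and>
        mact M i j m (zscale A c a) = mscale M c (mact M i j m a)) \<and>
     (\<forall>i j k m y x. m \<in> mcomp M k \<longrightarrow> y \<in> zcomp A j k \<longrightarrow> x \<in> zcomp A i j \<longrightarrow>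
        mact M i j (mact M j k m y) x = mact M i k m (zmul A i j k y x)) \<and>
     (\<forall>j m. m \<in> mcomp M j \<longrightarrow> mact M j j m (zone A j) = m)"

definition zmod_hom :: "('k::field, 'v::ab_group_add) zalg \<Rightarrow> ('k, 'v, 'm::ab_group_add) zmod
    \<Rightarrow> ('k, 'v, 'n::ab_group_add) zmod \<Rightarrow> (int \<Rightarrow> 'm \<Rightarrow> 'n) \<Rightarrow> bool" where
  "zmod_hom A M N h \<longleftrightarrow>
     (\<forall>i m. m \<in> mcomp M i \<longrightarrow> h i m \<in> mcomp N i) \<and>
     (\<forall>i m m'. m \<in> mcomp M i \<longrightarrow> m' \<in> mcomp M i \<longrightarrow> h i (m + m') = h i m + h i m') \<and>
     (\<forall>i c m. m \<in> mcomp M i \<longrightarrow> h i (mscale M c m) = mscale N c (h i m)) \<and>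
     (\<forall>i j m a. m \<in> mcomp M j \<longrightarrow> a \<in> zcomp A i j \<longrightarrow> h i (mact M i j m a) = mact N i j (h j m) a)"

definition zproj :: "('k, 'v) zalg \<Rightarrow> int \<Rightarrow> ('k, 'v, 'v) zmod" where
  "zproj A j = \<lparr> mscale = zscale A, mcomp = (\<lambda>i. zcomp A i j),
                 mact = (\<lambda>i l m a. zmul A i l j m a) \<rparr>"

definition zsimple :: "('k, 'v::zero) zalg \<Rightarrow> int \<Rightarrow> ('k, 'v, 'v) zmod" where
  "zsimple A j = \<lparr> mscale = zscale A,
                   mcomp = (\<lambda>i. if i = j then zcomp A j j else {0}),
                   mact = (\<lambda>i l m a. if i = j \<and> l = j then zmul A j j j m a else 0) \<rparr>"

text \<open>The class \<P>: the finite direct sum P_(js!0) (+) ... (+) P_(js!(n-1)), realised on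
  functions nat => 'v vanishing outside {0..<length js}.\<close>

definition zpsum :: "('k, 'v::zero) zalg \<Rightarrow> int list \<Rightarrow> ('k, 'v, nat \<Rightarrow> 'v) zmod" where
  "zpsum A js = \<lparr> mscale = (\<lambda>c v t. zscale A c (v t)),
                  mcomp = (\<lambda>i. {v. (\<forall>t < length js. v t \<in> zcomp A i (js ! t)) \<and>
                                    (\<forall>t \<ge> length js. v t = 0)}),
                  mact = (\<lambda>i l v a t. if t < length js then zmul A i l (js ! t) (v t) a else 0) \<rparr>"

definition zker :: "('k, 'v, 'm) zmod \<Rightarrow> (int \<Rightarrow> 'm \<Rightarrow> 'n::zero) \<Rightarrow> ('k, 'v, 'm) zmod" where
  "zker M h = M \<lparr> mcomp := (\<lambda>i. {m \<in> mcomp M i. h i m = 0}) \<rparr>"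

definition fin_gen :: "('k::field, 'v::ab_group_add) zalg \<Rightarrow> ('k, 'v, 'm::ab_group_add) zmod \<Rightarrow> bool" where
  "fin_gen A M \<longleftrightarrow> (\<exists>js h. zmod_hom A (zpsum A js) M h \<and>
                              (\<forall>i. h i ` mcomp (zpsum A js) i = mcomp M i))"

definition coherent_mod :: "('k::field, 'v::ab_group_add) zalg \<Rightarrow> ('k, 'v, 'm::ab_group_add) zmod \<Rightarrow> bool" where
  "coherent_mod A M \<longleftrightarrow> fin_gen A M \<and>
     (\<forall>js h. zmod_hom A (zpsum A js) M h \<longrightarrow> fin_gen A (zker (zpsum A js) h))"

definition coherent_zalg :: "('k::field, 'v::ab_group_add) zalg \<Rightarrow> bool" where
  "coherent_zalg A \<longleftrightarrow> (\<forall>j. coherent_mod A (zproj A j) \<and> coherent_mod A (zsimple A j))"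

definition zrestrict :: "(int \<Rightarrow> int \<Rightarrow> 'v \<Rightarrow> 'w) \<Rightarrow> ('k, 'w, 'm) zmod \<Rightarrow> ('k, 'v, 'm) zmod" where
  "zrestrict f M = \<lparr> mscale = mscale M, mcomp = mcomp M,
                     mact = (\<lambda>i l m a. mact M i l m (f i l a)) \<rparr>"

end

theory Submission
  imports Defs
begin

text \<open>
  Everything happens under restriction of scalars along \<open>f : A \<rightarrow> B\<close>. Generators of a
  \<open>B\<close>-module \<open>K\<close> viewed over \<open>A\<close> also generate \<open>K\<close> over \<open>B\<close>, so \<open>K\<close> is finitely generated
  as soon as its restriction is. Finite sums of the \<open>Q\<^sub>j\<close> are finitely generated over \<open>A\<close>;
  hence for a \<open>B\<close>-linear \<open>\<phi> : Q\<^sub>j\<^sub>1 \<oplus> \<dots> \<oplus> Q\<^sub>j\<^sub>n \<rightarrow> N\<close> the kernel, seen over \<open>A\<close>, is the kernel of a map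
  from a finitely generated \<open>A\<close>-module into \<open>N\<close>. If every map from \<open>\<P>\<close> into \<open>N\<close> has
  a finitely generated kernel over \<open>A\<close>, so does this one, and then \<open>ker \<phi>\<close> is finitely
  generated over \<open>B\<close>. This applies to \<open>N = Q\<^sub>j\<close> by hypothesis and to \<open>N = S\<^sub>j\<close>, because
  \<open>f\<close> identifies \<open>A\<^sub>j\<^sub>j = k = B\<^sub>j\<^sub>j\<close>, so that \<open>S\<^sub>j\<close> over \<open>B\<close> restricts to \<open>S\<^sub>j\<close> over \<open>A\<close>.
\<close>

lemma sum_fun_apply: "(\<Sum>t\<in>S. F t) x = (\<Sum>t\<in>S. F t x)"
  by (induction S rule: infinite_finite_induct) auto

lemma sum_Sigma_delta:
  fixes N :: nat
  assumes "\<And>t. finite (S t)"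
  shows "(\<Sum>(t, s)\<in>Sigma {..<N} S. if t = u then F t s else 0) =
    (if u < N then \<Sum>s\<in>S u. F u s else 0)"
proof -
  have "(\<Sum>(t, s)\<in>Sigma {..<N} S. if t = u then F t s else 0) =
      (\<Sum>t<N. \<Sum>s\<in>S t. if t = u then F t s else 0)"
    by (rule sum.Sigma[symmetric]) (simp_all add: assms)
  also have "\<dots> = (\<Sum>t<N. if t = u then \<Sum>s\<in>S t. F t s else 0)"
    by (intro sum.cong refl) simp
  finally show ?thesis
    by simp
qed

context
  fixes A :: "('k::field, 'v::ab_group_add) zalg"
  assumes zA: "zalgebra A"
begin

lemma zalgebra_vector_space: "vector_space (zscale A)"
  using zA by (simp add: zalgebra_def)

lemma zalgebra_module: "module (zscale A)"
  using zalgebra_vector_space by (simp add: module_iff_vector_space)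

lemma zcomp_subspace: "module.subspace (zscale A) (zcomp A i j)"
  using zA by (simp add: zalgebra_def)

lemma zcomp_zero [simp]: "0 \<in> zcomp A i j"
  using module.subspace_0[OF zalgebra_module zcomp_subspace] .

lemma zcomp_add: "x \<in> zcomp A i j \<Longrightarrow> y \<in> zcomp A i j \<Longrightarrow> x + y \<in> zcomp A i j"
  using module.subspace_add[OF zalgebra_module zcomp_subspace] .

lemma zcomp_scale: "x \<in> zcomp A i j \<Longrightarrow> zscale A c x \<in> zcomp A i j"
  using module.subspace_scale[OF zalgebra_module zcomp_subspace] .

lemma zcomp_below_diag: "j < i \<Longrightarrow> zcomp A i j = {0}"
  using zA by (simp add: zalgebra_def)

lemma zone_nonzero: "zone A i \<noteq> 0"
  using zA by (simp add: zalgebra_def)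

lemma zcomp_diag: "zcomp A i i = range (\<lambda>c. zscale A c (zone A i))"
  using zA module.span_singleton[OF zalgebra_module] by (simp add: zalgebra_def)

lemma zone_in_zcomp [simp]: "zone A i \<in> zcomp A i i"
  using zcomp_diag[of i] rangeI[of "\<lambda>c. zscale A c (zone A i)" 1]
  by (simp add: vector_space.vector_space_assms(4)[OF zalgebra_vector_space])

lemma zmul_in_zcomp: "x \<in> zcomp A j k \<Longrightarrow> y \<in> zcomp A i j \<Longrightarrow> zmul A i j k x y \<in> zcomp A i k"
  using zA by (simp add: zalgebra_def)

lemma zmul_add_left:
  "x \<in> zcomp A j k \<Longrightarrow> x' \<in> zcomp A j k \<Longrightarrow> y \<in> zcomp A i j \<Longrightarrow>
    zmul A i j k (x + x') y = zmul A i j k x y + zmul A i j k x' y"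
  using zA by (simp add: zalgebra_def)

lemma zmul_add_right:
  "x \<in> zcomp A j k \<Longrightarrow> y \<in> zcomp A i j \<Longrightarrow> y' \<in> zcomp A i j \<Longrightarrow>
    zmul A i j k x (y + y') = zmul A i j k x y + zmul A i j k x y'"
  using zA by (simp add: zalgebra_def)

lemma zmul_scale_left:
  "x \<in> zcomp A j k \<Longrightarrow> y \<in> zcomp A i j \<Longrightarrow>
    zmul A i j k (zscale A c x) y = zscale A c (zmul A i j k x y)"
  using zA by (simp add: zalgebra_def)

lemma zmul_scale_right:
  "x \<in> zcomp A j k \<Longrightarrow> y \<in> zcomp A i j \<Longrightarrow>
    zmul A i j k x (zscale A c y) = zscale A c (zmul A i j k x y)"
  using zA by (simp add: zalgebra_def)

lemma zmul_assoc:
  "x \<in> zcomp A k l \<Longrightarrow> y \<in> zcomp A j k \<Longrightarrow> z \<in> zcomp A i j \<Longrightarrow>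
    zmul A i k l x (zmul A i j k y z) = zmul A i j l (zmul A j k l x y) z"
  using zA by (simp add: zalgebra_def)

lemma zmul_one_left: "y \<in> zcomp A i j \<Longrightarrow> zmul A i j j (zone A j) y = y"
  using zA by (simp add: zalgebra_def)

lemma zmul_one_right: "y \<in> zcomp A i j \<Longrightarrow> zmul A i i j y (zone A i) = y"
  using zA by (simp add: zalgebra_def)

lemma zmul_zero_left: "y \<in> zcomp A i j \<Longrightarrow> zmul A i j k 0 y = 0"
  using zmul_add_left[of 0 j k 0 y i] by simp

lemma zmul_zero_right: "x \<in> zcomp A j k \<Longrightarrow> zmul A i j k x 0 = 0"
  using zmul_add_right[of x j k 0 i 0] by simp

lemma zmul_off_diag:
  assumes "l \<noteq> j" and "x \<in> zcomp A l j" and "a \<in> zcomp A j l"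
  shows "zmul A j l j x a = 0"
proof (cases "j < l")
  case True
  then show ?thesis using assms zcomp_below_diag zmul_zero_left by auto
next
  case False
  then show ?thesis using assms zcomp_below_diag[of l j] zmul_zero_right by auto
qed

end

context
  fixes A :: "('k::field, 'v::ab_group_add) zalg" and M :: "('k, 'v, 'm::ab_group_add) zmod"
  assumes zM: "is_zmod A M"
begin

lemma zmod_module: "module (mscale M)"
  using zM by (simp add: is_zmod_def module_iff_vector_space)

lemma mcomp_subspace: "module.subspace (mscale M) (mcomp M i)"
  using zM by (simp add: is_zmod_def)

lemma mcomp_zero [simp]: "0 \<in> mcomp M i"
  using module.subspace_0[OF zmod_module mcomp_subspace] .

lemma mcomp_add: "x \<in> mcomp M i \<Longrightarrow> y \<in> mcomp M i \<Longrightarrow> x + y \<in> mcomp M i"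
  using module.subspace_add[OF zmod_module mcomp_subspace] .

lemma mcomp_scale: "x \<in> mcomp M i \<Longrightarrow> mscale M c x \<in> mcomp M i"
  using module.subspace_scale[OF zmod_module mcomp_subspace] .

lemma mcomp_sum: "(\<And>x. x \<in> S \<Longrightarrow> g x \<in> mcomp M i) \<Longrightarrow> sum g S \<in> mcomp M i"
  using module.subspace_sum[OF zmod_module mcomp_subspace] .

lemma mact_in_mcomp: "m \<in> mcomp M j \<Longrightarrow> a \<in> zcomp A i j \<Longrightarrow> mact M i j m a \<in> mcomp M i"
  using zM by (simp add: is_zmod_def)

lemma mact_add_left:
  "m \<in> mcomp M j \<Longrightarrow> m' \<in> mcomp M j \<Longrightarrow> a \<in> zcomp A i j \<Longrightarrow>
    mact M i j (m + m') a = mact M i j m a + mact M i j m' a"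
  using zM by (simp add: is_zmod_def)

lemma mact_add_right:
  "m \<in> mcomp M j \<Longrightarrow> a \<in> zcomp A i j \<Longrightarrow> a' \<in> zcomp A i j \<Longrightarrow>
    mact M i j m (a + a') = mact M i j m a + mact M i j m a'"
  using zM by (simp add: is_zmod_def)

lemma mact_scale_right:
  "m \<in> mcomp M j \<Longrightarrow> a \<in> zcomp A i j \<Longrightarrow>
    mact M i j m (zscale A c a) = mscale M c (mact M i j m a)"
  using zM by (simp add: is_zmod_def)

lemma mact_assoc:
  "m \<in> mcomp M k \<Longrightarrow> y \<in> zcomp A j k \<Longrightarrow> x \<in> zcomp A i j \<Longrightarrow>
    mact M i j (mact M j k m y) x = mact M i k m (zmul A i j k y x)"
  using zM by (simp add: is_zmod_def)

lemma mact_zero_left: "a \<in> zcomp A i j \<Longrightarrow> mact M i j 0 a = 0"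
  using mact_add_left[of 0 j 0 a i] by simp

lemma mact_sum_left:
  "finite S \<Longrightarrow> (\<And>x. x \<in> S \<Longrightarrow> g x \<in> mcomp M j) \<Longrightarrow> a \<in> zcomp A i j \<Longrightarrow>
    mact M i j (sum g S) a = (\<Sum>x\<in>S. mact M i j (g x) a)"
  by (induction S rule: finite_induct) (simp_all add: mact_zero_left mact_add_left mcomp_sum)

end

context
  fixes A :: "('k::field, 'v::ab_group_add) zalg"
    and M :: "('k, 'v, 'm::ab_group_add) zmod" and N :: "('k, 'v, 'n::ab_group_add) zmod"
    and h :: "int \<Rightarrow> 'm \<Rightarrow> 'n"
  assumes h: "zmod_hom A M N h"
begin

lemma zmod_hom_in: "m \<in> mcomp M i \<Longrightarrow> h i m \<in> mcomp N i"
  using h by (simp add: zmod_hom_def)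

lemma zmod_hom_add: "m \<in> mcomp M i \<Longrightarrow> m' \<in> mcomp M i \<Longrightarrow> h i (m + m') = h i m + h i m'"
  using h by (simp add: zmod_hom_def)

lemma zmod_hom_scale: "m \<in> mcomp M i \<Longrightarrow> h i (mscale M c m) = mscale N c (h i m)"
  using h by (simp add: zmod_hom_def)

lemma zmod_hom_act:
  "m \<in> mcomp M j \<Longrightarrow> a \<in> zcomp A i j \<Longrightarrow> h i (mact M i j m a) = mact N i j (h j m) a"
  using h by (simp add: zmod_hom_def)

lemma zmod_hom_zero: "is_zmod A M \<Longrightarrow> h i 0 = 0"
  using zmod_hom_add[of 0 i 0] mcomp_zero by simp

lemma zmod_hom_sum:
  assumes zM: "is_zmod A M"
  shows "finite S \<Longrightarrow> (\<And>x. x \<in> S \<Longrightarrow> g x \<in> mcomp M i) \<Longrightarrow>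
    h i (sum g S) = (\<Sum>x\<in>S. h i (g x))"
  by (induction S rule: finite_induct)
    (simp_all add: zmod_hom_zero[OF zM] zmod_hom_add mcomp_sum[OF zM])

end

lemma zmod_hom_comp:
  "zmod_hom A M N h \<Longrightarrow> zmod_hom A N P g \<Longrightarrow> zmod_hom A M P (\<lambda>i m. g i (h i m))"
  unfolding zmod_hom_def by auto

lemma zalg_hom_in: "zalg_hom A B f \<Longrightarrow> x \<in> zcomp A i j \<Longrightarrow> f i j x \<in> zcomp B i j"
  by (simp add: zalg_hom_def)

lemma zalg_hom_add:
  "zalg_hom A B f \<Longrightarrow> x \<in> zcomp A i j \<Longrightarrow> y \<in> zcomp A i j \<Longrightarrow> f i j (x + y) = f i j x + f i j y"
  by (simp add: zalg_hom_def)

lemma zalg_hom_scale: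
  "zalg_hom A B f \<Longrightarrow> x \<in> zcomp A i j \<Longrightarrow> f i j (zscale A c x) = zscale B c (f i j x)"
  by (simp add: zalg_hom_def)

lemma zalg_hom_mul:
  "zalg_hom A B f \<Longrightarrow> x \<in> zcomp A j k \<Longrightarrow> y \<in> zcomp A i j \<Longrightarrow>
    f i k (zmul A i j k x y) = zmul B i j k (f j k x) (f i j y)"
  by (simp add: zalg_hom_def)

lemma zalg_hom_one: "zalg_hom A B f \<Longrightarrow> f i i (zone A i) = zone B i"
  by (simp add: zalg_hom_def)

lemma zalg_hom_zero: "zalgebra A \<Longrightarrow> zalg_hom A B f \<Longrightarrow> f i j 0 = 0"
  using zalg_hom_add[of A B f 0 i j 0] by simp

lemma zpsum_simps [simp]:
  "mscale (zpsum A js) = (\<lambda>c v t. zscale A c (v t))"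
  "mcomp (zpsum A js) i =
     {v. (\<forall>t < length js. v t \<in> zcomp A i (js ! t)) \<and> (\<forall>t \<ge> length js. v t = 0)}"
  "mact (zpsum A js) = (\<lambda>i l v a t. if t < length js then zmul A i l (js ! t) (v t) a else 0)"
  by (simp_all add: zpsum_def)

lemma zproj_simps [simp]:
  "mscale (zproj A j) = zscale A"
  "mcomp (zproj A j) i = zcomp A i j"
  "mact (zproj A j) = (\<lambda>i l m a. zmul A i l j m a)"
  by (simp_all add: zproj_def)

lemma zsimple_simps [simp]:
  "mscale (zsimple A j) = zscale A"
  "mcomp (zsimple A j) i = (if i = j then zcomp A j j else {0})"
  "mact (zsimple A j) = (\<lambda>i l m a. if i = j \<and> l = j then zmul A j j j m a else 0)"
  by (simp_all add: zsimple_def)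

lemma zrestrict_simps [simp]:
  "mscale (zrestrict f M) = mscale M"
  "mcomp (zrestrict f M) = mcomp M"
  "mact (zrestrict f M) = (\<lambda>i l m a. mact M i l m (f i l a))"
  by (simp_all add: zrestrict_def)

lemma zker_simps [simp]:
  "mscale (zker M h) = mscale M"
  "mcomp (zker M h) i = {m \<in> mcomp M i. h i m = 0}"
  "mact (zker M h) = mact M"
  by (simp_all add: zker_def)

lemma zrestrict_zker: "zrestrict f (zker M h) = zker (zrestrict f M) h"
  by (simp add: zrestrict_def zker_def)

lemma zrestrict_hom:
  "zalg_hom A B f \<Longrightarrow> zmod_hom B M N h \<Longrightarrow> zmod_hom A (zrestrict f M) (zrestrict f N) h"
  unfolding zmod_hom_def by (auto simp: zalg_hom_in)

lemma zproj_is_zmod: "zalgebra A \<Longrightarrow> is_zmod A (zproj A j)"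
  unfolding is_zmod_def
  by (auto simp: zalgebra_vector_space zcomp_subspace zmul_in_zcomp zmul_add_left zmul_add_right
      zmul_scale_left zmul_scale_right zmul_assoc zmul_one_right)

lemma zpsum_is_zmod:
  fixes A :: "('k::field, 'v::ab_group_add) zalg"
  assumes zA: "zalgebra A"
  shows "is_zmod A (zpsum A js)"
proof -
  have vs: "vector_space (\<lambda>c (v::nat \<Rightarrow> 'v) t. zscale A c (v t))"
    using vector_space.vector_space_assms[OF zalgebra_vector_space[OF zA]]
    by (simp add: vector_space_def fun_eq_iff)
  have "module.subspace (mscale (zpsum A js)) (mcomp (zpsum A js) i)" for i
    by (rule module.subspaceI)
      (auto simp: vs module_iff_vector_space zcomp_add[OF zA] zcomp_scale[OF zA] zA
        module.scale_zero_right[OF zalgebra_module[OF zA]])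
  with vs show ?thesis
    unfolding is_zmod_def
    by (auto simp: fun_eq_iff zA zmul_in_zcomp zmul_add_left zmul_add_right zmul_scale_left
        zmul_scale_right zmul_assoc zmul_one_right module.scale_zero_right[OF zalgebra_module[OF zA]])
qed

lemma zsimple_is_zmod:
  assumes zA: "zalgebra A"
  shows "is_zmod A (zsimple A j)"
proof -
  have "module.subspace (zscale A) (mcomp (zsimple A j) i)" for i
    using zcomp_subspace[OF zA] module.subspace_0[OF zalgebra_module[OF zA]]
    by (auto simp: module.subspace_def[OF zalgebra_module[OF zA]]
        module.scale_zero_right[OF zalgebra_module[OF zA]])
  then show ?thesis
    unfolding is_zmod_def
    by (auto simp: zA zalgebra_vector_space zmul_in_zcomp zmul_add_left zmul_add_right
        zmul_scale_left zmul_scale_right zmul_assoc zmul_one_right zmul_zero_left zmul_zero_right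
        zmul_off_diag module.scale_zero_right[OF zalgebra_module[OF zA]])
qed

lemma zrestrict_is_zmod:
  assumes zA: "zalgebra A" and f: "zalg_hom A B f" and zM: "is_zmod B M"
  shows "is_zmod A (zrestrict f M)"
  using zM unfolding is_zmod_def
  by (auto simp: zalg_hom_in[OF f] zalg_hom_add[OF f] zalg_hom_scale[OF f] zalg_hom_mul[OF f]
      zalg_hom_one[OF f])

lemma zker_is_zmod:
  assumes zM: "is_zmod A M" and zN: "is_zmod A N" and h: "zmod_hom A M N h"
  shows "is_zmod A (zker M h)"
proof -
  have "module.subspace (mscale M) {m \<in> mcomp M i. h i m = 0}" for i
    by (rule module.subspaceI[OF zmod_module[OF zM]])
      (auto simp: zmod_hom_add[OF h] zmod_hom_scale[OF h] zmod_hom_zero[OF h zM]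
        mcomp_add[OF zM] mcomp_scale[OF zM] mcomp_zero[OF zM] module.scale_zero_right[OF zmod_module[OF zN]])
  then show ?thesis
    using zM unfolding is_zmod_def
    by (auto simp: zmod_hom_act[OF h] mact_zero_left[OF zN])
qed

definition zgenerates ::
    "('k::field, 'v::ab_group_add) zalg \<Rightarrow> ('k, 'v, 'm::ab_group_add) zmod \<Rightarrow> 'i set \<Rightarrow>
      ('i \<Rightarrow> int) \<Rightarrow> ('i \<Rightarrow> 'm) \<Rightarrow> bool" where
  "zgenerates A M I deg g \<longleftrightarrow>
     (\<forall>x\<in>I. g x \<in> mcomp M (deg x)) \<and>
     (\<forall>i m. m \<in> mcomp M i \<longrightarrow> (\<exists>a. (\<forall>x\<in>I. a x \<in> zcomp A i (deg x)) \<and>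
        m = (\<Sum>x\<in>I. mact M i (deg x) (g x) (a x))))"

lemma zgeneratesD:
  assumes "zgenerates A M I deg g" and "m \<in> mcomp M i"
  obtains a where "\<forall>x\<in>I. a x \<in> zcomp A i (deg x)"
    and "m = (\<Sum>x\<in>I. mact M i (deg x) (g x) (a x))"
  using assms unfolding zgenerates_def by blast

definition zpsum_basis :: "('k, 'v::zero) zalg \<Rightarrow> int list \<Rightarrow> nat \<Rightarrow> nat \<Rightarrow> 'v" where
  "zpsum_basis A js t = (\<lambda>s. if s = t then zone A (js ! t) else 0)"

lemma zpsum_basis_in:
  "zalgebra A \<Longrightarrow> t < length js \<Longrightarrow> zpsum_basis A js t \<in> mcomp (zpsum A js) (js ! t)"
  by (auto simp: zpsum_basis_def)

lemma zpsum_basis_expansion: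
  assumes zA: "zalgebra A" and v: "v \<in> mcomp (zpsum A js) i"
  shows "v = (\<Sum>t<length js. mact (zpsum A js) i (js ! t) (zpsum_basis A js t) (v t))"
proof
  fix s
  have "(\<Sum>t<length js. mact (zpsum A js) i (js ! t) (zpsum_basis A js t) (v t)) s =
      (\<Sum>t<length js. if t = s then v s else 0)"
    unfolding sum_fun_apply
    using v
    by (intro sum.cong) (auto simp: zpsum_basis_def zmul_one_left[OF zA] zmul_zero_left[OF zA])
  also have "\<dots> = v s"
    using v by simp
  finally show "v s = (\<Sum>t<length js. mact (zpsum A js) i (js ! t) (zpsum_basis A js t) (v t)) s" ..
qed

lemma zpsum_hom_from_elements:
  assumes zM: "is_zmod A M" and g: "\<forall>t < length js. g t \<in> mcomp M (js ! t)"
  shows "zmod_hom A (zpsum A js) M (\<lambda>i w. \<Sum>t<length js. mact M i (js ! t) (g t) (w t))"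
  unfolding zmod_hom_def
proof (intro conjI allI impI)
  fix i w
  assume "w \<in> mcomp (zpsum A js) i"
  then show "(\<Sum>t<length js. mact M i (js ! t) (g t) (w t)) \<in> mcomp M i"
    using g by (auto intro!: mcomp_sum[OF zM] mact_in_mcomp[OF zM])
next
  fix i w w'
  assume "w \<in> mcomp (zpsum A js) i" and "w' \<in> mcomp (zpsum A js) i"
  then show "(\<Sum>t<length js. mact M i (js ! t) (g t) ((w + w') t)) =
      (\<Sum>t<length js. mact M i (js ! t) (g t) (w t)) + (\<Sum>t<length js. mact M i (js ! t) (g t) (w' t))"
    using g by (simp add: mact_add_right[OF zM] sum.distrib[symmetric])
next
  fix i c w
  assume "w \<in> mcomp (zpsum A js) i"
  then show "(\<Sum>t<length js. mact M i (js ! t) (g t) (mscale (zpsum A js) c w t)) =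
      mscale M c (\<Sum>t<length js. mact M i (js ! t) (g t) (w t))"
    using g by (simp add: mact_scale_right[OF zM] module.scale_sum_right[OF zmod_module[OF zM]])
next
  fix i l w a
  assume w: "w \<in> mcomp (zpsum A js) l" and a: "a \<in> zcomp A i l"
  have "(\<Sum>t<length js. mact M i (js ! t) (g t) (mact (zpsum A js) i l w a t)) =
      (\<Sum>t<length js. mact M i l (mact M l (js ! t) (g t) (w t)) a)"
    using w g a by (intro sum.cong) (simp_all add: mact_assoc[OF zM])
  also have "\<dots> = mact M i l (\<Sum>t<length js. mact M l (js ! t) (g t) (w t)) a"
    using w g a by (intro mact_sum_left[OF zM, symmetric]) (simp_all add: mact_in_mcomp[OF zM])
  finally show "(\<Sum>t<length js. mact M i (js ! t) (g t) (mact (zpsum A js) i l w a t)) =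
      mact M i l (\<Sum>t<length js. mact M l (js ! t) (g t) (w t)) a" .
qed

lemma fin_gen_imp_zgenerates:
  assumes zA: "zalgebra A" and fg: "fin_gen A M"
  obtains n deg g where "zgenerates A M {..<n::nat} deg g"
proof -
  obtain js h where h: "zmod_hom A (zpsum A js) M h"
    and h_onto: "\<And>i. h i ` mcomp (zpsum A js) i = mcomp M i"
    using fg unfolding fin_gen_def by blast
  note P = zpsum_is_zmod[OF zA, of js]
  define g where "g t = h (js ! t) (zpsum_basis A js t)" for t
  have "zgenerates A M {..<length js} ((!) js) g"
    unfolding zgenerates_def
  proof (intro conjI ballI allI impI)
    fix t
    assume "t \<in> {..<length js}"
    then show "g t \<in> mcomp M (js ! t)"
      unfolding g_def using zmod_hom_in[OF h] zpsum_basis_in[OF zA] by simp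
  next
    fix i m
    assume "m \<in> mcomp M i"
    then obtain v where v: "v \<in> mcomp (zpsum A js) i" and m: "m = h i v"
      using h_onto by blast
    have basis_act_in:
      "mact (zpsum A js) i (js ! t) (zpsum_basis A js t) (v t) \<in> mcomp (zpsum A js) i"
      if "t < length js" for t
      by (rule mact_in_mcomp[OF P zpsum_basis_in[OF zA that]]) (use v that in simp)
    have "h i v = (\<Sum>t<length js. h i (mact (zpsum A js) i (js ! t) (zpsum_basis A js t) (v t)))"
      by (subst zpsum_basis_expansion[OF zA v], rule zmod_hom_sum[OF h P])
        (simp_all add: basis_act_in del: zpsum_simps)
    also have "\<dots> = (\<Sum>t<length js. mact M i (js ! t) (g t) (v t))"
      unfolding g_def
      by (intro sum.cong refl zmod_hom_act[OF h zpsum_basis_in[OF zA]]) (use v in auto)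
    finally show "\<exists>a. (\<forall>t\<in>{..<length js}. a t \<in> zcomp A i (js ! t)) \<and>
        m = (\<Sum>t\<in>{..<length js}. mact M i (js ! t) (g t) (a t))"
      using v m by auto
  qed
  then show ?thesis by (rule that)
qed

lemma zgenerates_imp_fin_gen:
  assumes zM: "is_zmod A M" and I: "finite I" and gen: "zgenerates A M I deg g"
  shows "fin_gen A M"
proof -
  obtain b where b: "bij_betw b {..<card I} I"
    using ex_bij_betw_nat_finite[OF I] by (auto simp: atLeast0LessThan)
  define js where "js = map (deg \<circ> b) [0..<card I]"
  define H where "H i w = (\<Sum>t<length js. mact M i (js ! t) (g (b t)) (w t))" for i w
  have gen_in: "\<forall>t < length js. g (b t) \<in> mcomp M (js ! t)"
    using gen bij_betwE[OF b] by (auto simp: zgenerates_def js_def)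
  have H: "zmod_hom A (zpsum A js) M H"
    unfolding H_def by (rule zpsum_hom_from_elements[OF zM gen_in])
  have "H i ` mcomp (zpsum A js) i = mcomp M i" for i
  proof
    show "H i ` mcomp (zpsum A js) i \<subseteq> mcomp M i"
      using zmod_hom_in[OF H] by blast
    show "mcomp M i \<subseteq> H i ` mcomp (zpsum A js) i"
    proof
      fix m
      assume "m \<in> mcomp M i"
      then obtain a where a: "\<forall>x\<in>I. a x \<in> zcomp A i (deg x)"
        and m: "m = (\<Sum>x\<in>I. mact M i (deg x) (g x) (a x))"
        by (rule zgeneratesD[OF gen])
      define w where "w t = (if t < card I then a (b t) else 0)" for t
      have "w \<in> mcomp (zpsum A js) i"
        using a bij_betwE[OF b] by (auto simp: w_def js_def)
      moreover have "H i w = m"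
      proof -
        have "H i w = (\<Sum>t<card I. mact M i (deg (b t)) (g (b t)) (a (b t)))"
          unfolding H_def by (intro sum.cong) (simp_all add: w_def js_def)
        also have "\<dots> = m"
          unfolding m by (rule sum.reindex_bij_betw[OF b])
        finally show ?thesis .
      qed
      ultimately show "m \<in> H i ` mcomp (zpsum A js) i" by blast
    qed
  qed
  with H show ?thesis
    unfolding fin_gen_def by blast
qed

lemma fin_gen_of_zrestrict:
  assumes zA: "zalgebra A" and f: "zalg_hom A B f"
    and zK: "is_zmod B K" and fg: "fin_gen A (zrestrict f K)"
  shows "fin_gen B K"
proof -
  obtain n deg g where gen: "zgenerates A (zrestrict f K) {..<n::nat} deg g"
    using fin_gen_imp_zgenerates[OF zA fg] .
  have "zgenerates B K {..<n} deg g"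
    unfolding zgenerates_def
  proof (intro conjI allI impI)
    show "\<forall>x\<in>{..<n}. g x \<in> mcomp K (deg x)"
      using gen by (simp add: zgenerates_def)
  next
    fix i m
    assume "m \<in> mcomp K i"
    then obtain a where "\<forall>x\<in>{..<n}. a x \<in> zcomp A i (deg x)"
      and "m = (\<Sum>x<n. mact K i (deg x) (g x) (f i (deg x) (a x)))"
      using gen unfolding zgenerates_def zrestrict_simps by blast
    then show "\<exists>b. (\<forall>x\<in>{..<n}. b x \<in> zcomp B i (deg x)) \<and>
        m = (\<Sum>x\<in>{..<n}. mact K i (deg x) (g x) (b x))"
      by (auto intro!: exI[of _ "\<lambda>x. f i (deg x) (a x)"] zalg_hom_in[OF f])
  qed
  then show ?thesis
    by (rule zgenerates_imp_fin_gen[OF zK finite_lessThan])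
qed

lemma fin_gen_zsimple:
  assumes zA: "zalgebra A"
  shows "fin_gen A (zsimple A j)"
proof (rule zgenerates_imp_fin_gen[OF zsimple_is_zmod[OF zA] finite.insertI[OF finite.emptyI]])
  show "zgenerates A (zsimple A j) {()} (\<lambda>_. j) (\<lambda>_. zone A j)"
    unfolding zgenerates_def
  proof (intro conjI allI impI ballI)
    fix i m
    assume m: "m \<in> mcomp (zsimple A j) i"
    show "\<exists>a. (\<forall>x\<in>{()}. a x \<in> zcomp A i j) \<and>
        m = (\<Sum>x\<in>{()}. mact (zsimple A j) i j (zone A j) (a x))"
    proof (cases "i = j")
      case True
      then show ?thesis
        using m by (auto intro!: exI[of _ "\<lambda>_. m"] simp: zmul_one_left[OF zA])
    next
      case False
      then show ?thesis
        using m by (auto intro!: exI[of _ "\<lambda>_. 0"] simp: zA)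
    qed
  qed (simp add: zA)
qed

lemma zgenerates_zrestrict_zpsum:
  fixes A :: "('k::field, 'v::ab_group_add) zalg" and B :: "('k, 'w::ab_group_add) zalg"
  assumes zB: "zalgebra B" and f: "zalg_hom A B f"
    and gen: "\<And>j. zgenerates A (zrestrict f (zproj B j)) {..<n j :: nat} (deg j) (g j)"
  shows "zgenerates A (zrestrict f (zpsum B js)) (SIGMA t:{..<length js}. {..<n (js ! t)})
      (\<lambda>(t, s). deg (js ! t) s) (\<lambda>(t, s) u. if u = t then g (js ! t) s else 0)"
    (is "zgenerates A ?M ?I ?D ?G")
  unfolding zgenerates_def
proof (intro conjI allI impI ballI)
  fix x
  assume "x \<in> ?I"
  then show "?G x \<in> mcomp ?M (?D x)"
    using gen by (auto simp: zgenerates_def zB)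
next
  fix i w
  assume w: "w \<in> mcomp ?M i"
  define summand where
    "summand t s b = zmul B i (deg (js ! t) s) (js ! t) (g (js ! t) s) (f i (deg (js ! t) s) b)"
    for t s b
  have "\<forall>t\<in>{..<length js}. \<exists>c.
      (\<forall>s<n (js ! t). c s \<in> zcomp A i (deg (js ! t) s)) \<and> w t = (\<Sum>s<n (js ! t). summand t s (c s))"
  proof
    fix t
    assume "t \<in> {..<length js}"
    then have "w t \<in> mcomp (zrestrict f (zproj B (js ! t))) i"
      using w by simp
    then obtain c where "\<forall>s\<in>{..<n (js ! t)}. c s \<in> zcomp A i (deg (js ! t) s)"
      and "w t = (\<Sum>s\<in>{..<n (js ! t)}.
             mact (zrestrict f (zproj B (js ! t))) i (deg (js ! t) s) (g (js ! t) s) (c s))"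
      by (rule zgeneratesD[OF gen])
    then show "\<exists>c. (\<forall>s<n (js ! t). c s \<in> zcomp A i (deg (js ! t) s)) \<and>
        w t = (\<Sum>s<n (js ! t). summand t s (c s))"
      by (auto simp: summand_def)
  qed
  from bchoice[OF this] obtain c where c: "\<forall>t\<in>{..<length js}.
      (\<forall>s<n (js ! t). c t s \<in> zcomp A i (deg (js ! t) s)) \<and> w t = (\<Sum>s<n (js ! t). summand t s (c t s))"
    by blast
  define a where "a = (\<lambda>(t, s). c t s)"
  have "(\<Sum>x\<in>?I. mact ?M i (?D x) (?G x) (a x)) u =
      (\<Sum>(t, s)\<in>?I. if t = u then summand t s (c t s) else 0)" for u
    unfolding sum_fun_apply
  proof (intro sum.cong refl)
    fix x
    assume "x \<in> ?I"
    then obtain t s where x: "x = (t, s)" and t: "t < length js" and s: "s < n (js ! t)"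
      by blast
    have "f i (deg (js ! t) s) (c t s) \<in> zcomp B i (deg (js ! t) s)"
      using c t s by (simp add: zalg_hom_in[OF f])
    then show "mact ?M i (?D x) (?G x) (a x) u =
        (case x of (t, s) \<Rightarrow> if t = u then summand t s (c t s) else 0)"
      using t by (auto simp: x a_def summand_def zmul_zero_left[OF zB])
  qed
  then have "w = (\<Sum>x\<in>?I. mact ?M i (?D x) (?G x) (a x))"
    using w c by (auto simp: sum_Sigma_delta)
  then show "\<exists>a. (\<forall>x\<in>?I. a x \<in> zcomp A i (?D x)) \<and>
      w = (\<Sum>x\<in>?I. mact ?M i (?D x) (?G x) (a x))"
    using c by (intro exI[of _ a]) (auto simp: a_def)
qed

lemma fin_gen_zrestrict_zpsum:
  fixes A :: "('k::field, 'v::ab_group_add) zalg" and B :: "('k, 'w::ab_group_add) zalg"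
  assumes zA: "zalgebra A" and zB: "zalgebra B" and f: "zalg_hom A B f"
    and fgQ: "\<And>j. fin_gen A (zrestrict f (zproj B j))"
  shows "fin_gen A (zrestrict f (zpsum B js))"
proof -
  have "\<forall>j. \<exists>n deg g. zgenerates A (zrestrict f (zproj B j)) {..<n::nat} deg g"
    using fin_gen_imp_zgenerates[OF zA fgQ] by metis
  then obtain n deg g
    where gen: "\<And>j. zgenerates A (zrestrict f (zproj B j)) {..<n j :: nat} (deg j) (g j)"
    unfolding choice_iff by blast
  show ?thesis
    by (rule zgenerates_imp_fin_gen[OF zrestrict_is_zmod[OF zA f zpsum_is_zmod[OF zB]] _
          zgenerates_zrestrict_zpsum[OF zB f gen]]) simp
qed

definition fin_gen_kernels ::
    "('k::field, 'v::ab_group_add) zalg \<Rightarrow> ('k, 'v, 'm::ab_group_add) zmod \<Rightarrow> bool" where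
  "fin_gen_kernels A M \<longleftrightarrow>
     (\<forall>js h. zmod_hom A (zpsum A js) M h \<longrightarrow> fin_gen A (zker (zpsum A js) h))"

lemma coherent_mod_iff: "coherent_mod A M \<longleftrightarrow> fin_gen A M \<and> fin_gen_kernels A M"
  by (simp add: coherent_mod_def fin_gen_kernels_def)

lemma fin_gen_zker:
  assumes fg: "fin_gen A M" and \<psi>: "zmod_hom A M N \<psi>" and fgk: "fin_gen_kernels A N"
  shows "fin_gen A (zker M \<psi>)"
proof -
  obtain js \<pi> where \<pi>: "zmod_hom A (zpsum A js) M \<pi>"
    and \<pi>_onto: "\<And>i. \<pi> i ` mcomp (zpsum A js) i = mcomp M i"
    using fg unfolding fin_gen_def by blast
  let ?K = "zker (zpsum A js) (\<lambda>i m. \<psi> i (\<pi> i m))"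
  obtain js' \<kappa> where \<kappa>: "zmod_hom A (zpsum A js') ?K \<kappa>"
    and \<kappa>_onto: "\<And>i. \<kappa> i ` mcomp (zpsum A js') i = mcomp ?K i"
    using fgk zmod_hom_comp[OF \<pi> \<psi>] unfolding fin_gen_kernels_def fin_gen_def by blast
  have hom: "zmod_hom A (zpsum A js') (zker M \<psi>) (\<lambda>i q. \<pi> i (\<kappa> i q))"
    using \<kappa> \<pi> unfolding zmod_hom_def by (auto simp del: zpsum_simps)
  have "(\<lambda>q. \<pi> i (\<kappa> i q)) ` mcomp (zpsum A js') i = mcomp (zker M \<psi>) i" for i
  proof
    show "(\<lambda>q. \<pi> i (\<kappa> i q)) ` mcomp (zpsum A js') i \<subseteq> mcomp (zker M \<psi>) i"
      using zmod_hom_in[OF hom] by blast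
    show "mcomp (zker M \<psi>) i \<subseteq> (\<lambda>q. \<pi> i (\<kappa> i q)) ` mcomp (zpsum A js') i"
    proof
      fix m
      assume m: "m \<in> mcomp (zker M \<psi>) i"
      then have "m \<in> \<pi> i ` mcomp (zpsum A js) i"
        unfolding \<pi>_onto by simp
      then obtain p where "p \<in> mcomp (zpsum A js) i" and pm: "\<pi> i p = m"
        by blast
      with m have "p \<in> mcomp ?K i"
        by (simp del: zpsum_simps)
      then have "p \<in> \<kappa> i ` mcomp (zpsum A js') i"
        unfolding \<kappa>_onto .
      with pm show "m \<in> (\<lambda>q. \<pi> i (\<kappa> i q)) ` mcomp (zpsum A js') i"
        by blast
    qed
  qed
  with hom show ?thesis
    unfolding fin_gen_def by blast
qed

lemma zmod_hom_inv_into: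
  assumes zM: "is_zmod A M" and F: "zmod_hom A M N F"
    and bij: "\<And>i. bij_betw (F i) (mcomp M i) (mcomp N i)"
  shows "zmod_hom A N M (\<lambda>i. inv_into (mcomp M i) (F i))"
proof -
  define G where "G i = inv_into (mcomp M i) (F i)" for i
  have G_in: "G i n \<in> mcomp M i" if "n \<in> mcomp N i" for i n
    using that bij_betw_inv_into[OF bij] bij_betwE unfolding G_def by blast
  have F_G: "F i (G i n) = n" if "n \<in> mcomp N i" for i n
    using that bij_betw_inv_into_right[OF bij] unfolding G_def by blast
  have G_eqI: "G i n = m" if "m \<in> mcomp M i" and "F i m = n" for i n m
    using that bij_betw_inv_into_left[OF bij] unfolding G_def by blast
  have "zmod_hom A N M G"
    unfolding zmod_hom_def
  proof (intro conjI allI impI)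
    fix i n n'
    assume "n \<in> mcomp N i" and "n' \<in> mcomp N i"
    then show "G i (n + n') = G i n + G i n'"
      by (intro G_eqI) (simp_all add: G_in F_G mcomp_add[OF zM] zmod_hom_add[OF F])
  next
    fix i c n
    assume "n \<in> mcomp N i"
    then show "G i (mscale N c n) = mscale M c (G i n)"
      by (intro G_eqI) (simp_all add: G_in F_G mcomp_scale[OF zM] zmod_hom_scale[OF F])
  next
    fix i l n a
    assume "n \<in> mcomp N l" and "a \<in> zcomp A i l"
    then show "G i (mact N i l n a) = mact M i l (G l n) a"
      by (intro G_eqI) (simp_all add: G_in F_G mact_in_mcomp[OF zM] zmod_hom_act[OF F])
  qed (simp add: G_in)
  then show ?thesis
    unfolding G_def .
qed

lemma zker_comp_injective:
  assumes h: "zmod_hom A M N h" and G_inj: "\<And>i n. n \<in> mcomp N i \<Longrightarrow> G i n = 0 \<longleftrightarrow> n = 0"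
  shows "zker M (\<lambda>i m. G i (h i m)) = zker M h"
proof -
  have "G i (h i m) = 0 \<longleftrightarrow> h i m = 0" if "m \<in> mcomp M i" for i m
    by (rule G_inj[OF zmod_hom_in[OF h that]])
  then have "{m \<in> mcomp M i. G i (h i m) = 0} = {m \<in> mcomp M i. h i m = 0}" for i
    by blast
  then show ?thesis
    unfolding zker_def by simp
qed

lemma fin_gen_kernels_iso:
  assumes zN': "is_zmod A N'" and F: "zmod_hom A N' N F"
    and bij: "\<And>i. bij_betw (F i) (mcomp N' i) (mcomp N i)" and fgk: "fin_gen_kernels A N'"
  shows "fin_gen_kernels A N"
  unfolding fin_gen_kernels_def
proof (intro allI impI)
  fix js h
  assume h: "zmod_hom A (zpsum A js) N h"
  define G where "G i = inv_into (mcomp N' i) (F i)" for i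
  have G: "zmod_hom A N N' G"
    unfolding G_def by (rule zmod_hom_inv_into[OF zN' F bij])
  have F0: "F i 0 = 0" for i
    by (rule zmod_hom_zero[OF F zN'])
  have G0: "G i 0 = 0" for i
    using bij_betw_inv_into_left[OF bij mcomp_zero[OF zN']] unfolding G_def F0 .
  have "G i n = 0 \<longleftrightarrow> n = 0" if "n \<in> mcomp N i" for i n
    using bij_betw_inv_into_right[OF bij that] F0 G0 unfolding G_def by metis
  then have "zker (zpsum A js) (\<lambda>i m. G i (h i m)) = zker (zpsum A js) h"
    by (rule zker_comp_injective[OF h])
  moreover have "fin_gen A (zker (zpsum A js) (\<lambda>i m. G i (h i m)))"
    using fgk zmod_hom_comp[OF h G] unfolding fin_gen_kernels_def by blast
  ultimately show "fin_gen A (zker (zpsum A js) h)"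
    by simp
qed

lemma zalg_hom_bij_diag:
  assumes zA: "zalgebra A" and zB: "zalgebra B" and f: "zalg_hom A B f"
  shows "bij_betw (f j j) (zcomp A j j) (zcomp B j j)"
proof -
  have f_scale_one: "f j j (zscale A c (zone A j)) = zscale B c (zone B j)" for c
    by (simp add: zalg_hom_scale[OF f] zalg_hom_one[OF f] zA)
  have "inj (\<lambda>c. zscale B c (zone B j))"
    using vector_space.scale_cancel_right[OF zalgebra_vector_space[OF zB]] zone_nonzero[OF zB]
    by (auto intro: injI)
  then have "inj_on (f j j) (range (\<lambda>c. zscale A c (zone A j)))"
    by (auto simp: inj_on_def f_scale_one)
  moreover have "f j j ` range (\<lambda>c. zscale A c (zone A j)) = range (\<lambda>c. zscale B c (zone B j))"
    by (simp add: image_image f_scale_one)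
  ultimately show ?thesis
    unfolding bij_betw_def zcomp_diag[OF zA] zcomp_diag[OF zB] ..
qed

lemma fin_gen_kernels_zrestrict_zsimple:
  assumes zA: "zalgebra A" and zB: "zalgebra B" and f: "zalg_hom A B f"
    and fgk: "fin_gen_kernels A (zsimple A j)"
  shows "fin_gen_kernels A (zrestrict f (zsimple B j))"
proof (rule fin_gen_kernels_iso[OF zsimple_is_zmod[OF zA] _ _ fgk])
  show "zmod_hom A (zsimple A j) (zrestrict f (zsimple B j)) (\<lambda>i. f i i)"
    unfolding zmod_hom_def
    by (auto simp: zalg_hom_in[OF f] zalg_hom_add[OF f] zalg_hom_scale[OF f] zalg_hom_mul[OF f]
        zalg_hom_zero[OF zA f] module.scale_zero_right[OF zalgebra_module[OF zA]]
        module.scale_zero_right[OF zalgebra_module[OF zB]])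
  show "bij_betw (f i i) (mcomp (zsimple A j) i) (mcomp (zrestrict f (zsimple B j)) i)" for i
    using zalg_hom_bij_diag[OF zA zB f, of j] by (simp add: zalg_hom_zero[OF zA f] bij_betw_def)
qed

lemma fin_gen_kernels_of_zrestrict:
  assumes zA: "zalgebra A" and zB: "zalgebra B" and f: "zalg_hom A B f"
    and fgQ: "\<And>j. fin_gen A (zrestrict f (zproj B j))"
    and zN: "is_zmod B N" and fgk: "fin_gen_kernels A (zrestrict f N)"
  shows "fin_gen_kernels B N"
  unfolding fin_gen_kernels_def
proof (intro allI impI)
  fix js \<phi>
  assume \<phi>: "zmod_hom B (zpsum B js) N \<phi>"
  have "fin_gen A (zrestrict f (zker (zpsum B js) \<phi>))"
    unfolding zrestrict_zker
    by (rule fin_gen_zker[OF fin_gen_zrestrict_zpsum[OF zA zB f fgQ] zrestrict_hom[OF f \<phi>] fgk])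
  then show "fin_gen B (zker (zpsum B js) \<phi>)"
    by (rule fin_gen_of_zrestrict[OF zA f zker_is_zmod[OF zpsum_is_zmod[OF zB] zN \<phi>]])
qed

theorem proposition1p6:
  fixes A :: "('k::field, 'v::ab_group_add) zalg"
    and B :: "('k, 'w::ab_group_add) zalg"
    and f :: "int \<Rightarrow> int \<Rightarrow> 'v \<Rightarrow> 'w"
  assumes "zalgebra A" and "zalgebra B" and "zalg_hom A B f"
    and "coherent_zalg A"
    and "\<forall>j. coherent_mod A (zrestrict f (zproj B j))"
  shows "coherent_zalg B"
proof -
  note zA = assms(1) and zB = assms(2) and f = assms(3)
  have fgQ: "fin_gen A (zrestrict f (zproj B j))"
    and fgkQ: "fin_gen_kernels A (zrestrict f (zproj B j))" for j
    using assms(5) by (simp_all add: coherent_mod_iff)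
  have fgkS: "fin_gen_kernels A (zsimple A j)" for j
    using assms(4) by (simp add: coherent_zalg_def coherent_mod_iff)
  have "coherent_mod B (zproj B j)" for j
    unfolding coherent_mod_iff
    using fin_gen_of_zrestrict[OF zA f zproj_is_zmod[OF zB] fgQ]
      fin_gen_kernels_of_zrestrict[OF zA zB f fgQ zproj_is_zmod[OF zB] fgkQ] ..
  moreover have "coherent_mod B (zsimple B j)" for j
    unfolding coherent_mod_iff
    using fin_gen_zsimple[OF zB] fin_gen_kernels_of_zrestrict[OF zA zB f fgQ zsimple_is_zmod[OF zB]
        fin_gen_kernels_zrestrict_zsimple[OF zA zB f fgkS]] ..
  ultimately show ?thesis
    unfolding coherent_zalg_def by blast
qed

end
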